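(* For every $n\geq1$ and all $k_1,\dots,k_n\geq0$ there are isomorphisms of $\Sigma$-spaces \[ \mathcal{P}^{(n)}\Delta[k_1,\dots,k_n]\;\cong\;\mathcal{P}\Delta[k_1]\times\dots\times\mathcal{P}\Delta[k_n]\;\cong\;N^{\mathrm{ex}}\mathrm{Ar}[k_1]\times\dots\times N^{\mathrm{ex}}\mathrm{Ar}[k_n]. \]
   Context: Let $\Delta$ be the simplex category and let $\Sigma$ be the category obtained from $\Delta\times\Delta$ by freely adjoining a terminal object $[-1]$. A $\Sigma$-space is a functor $\Sigma^{\mathrm{op}}\to\mathcal{S}$ to spaces (e.g. simplicial sets); equivalently, a bisimplicial space $X_{\bullet,\bullet}$ together with a space $X_{-1}$ and an augmentation map $X_{-1}\to X_{0,0}$ (induced by the unique map $([0],[0])\to[-1]$). Products of $\Sigma$-spaces are taken levelwise. Let $p\colon\Sigma\to\Delta$ be the ordinal sum functor, $[-1]\mapsto[0]$ and $([a],[b])\mapsto[a+1+b]$ (on morphisms: ordinal sum of maps, and the unique map to $[0]$ for maps to $[-1]$). Let $\mathcal{P}=p^*\colon\mathcal{S}^{\Delta^{\mathrm{op}}}\to\mathcal{S}^{\Sigma^{\mathrm{op}}}$ be precomposition with $p$. For $n\geq1$ let $p^{(n)}\colon\Sigma\to\Delta^{\times n}$ be $\sigma\mapsto(p(\sigma),\dots,p(\sigma))$ and $\mathcal{P}^{(n)}=(p^{(n)})^*\colon\mathcal{S}^{(\Delta^{\mathrm{op}})^{\times n}}\to\mathcal{S}^{\Sigma^{\mathrm{op}}}$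 precomposition with $p^{(n)}$. Here $\Delta[k]$ denotes the (discrete) simplicial space represented by $[k]$, and $\Delta[k_1,\dots,k_n]$ the (discrete) $n$-fold simplicial space represented by $([k_1],\dots,[k_n])$. For $k\geq0$, let $\mathrm{Ar}[k]=[k]^{[1]}$ be the arrow category of $[k]$, i.e. the poset of pairs $(i,j)$ with $0\le i\le j\le k$, with $(i,j)\le(i',j')$ iff $i\le i'$ and $j\le j'$. Call a morphism $(i,j)\to(i,j')$ horizontal and a morphism $(i,j)\to(i',j)$ vertical; the objects $(i,i)$ are the zero objects. The exact nerve $N^{\mathrm{ex}}\mathrm{Ar}[k]$ is the (discrete) $\Sigma$-space with $N^{\mathrm{ex}}_{-1}\mathrm{Ar}[k]$ the set of zero objects $(i,i)$, and $N^{\mathrm{ex}}_{a,b}\mathrm{Ar}[k]$ the set of exact functors $F\colon[a]\times[b]\to\mathrm{Ar}[k]$, i.e. functors sending each morphism $(i,j)\to(i,j+\ell)$ of $[a]\times[b]$ to a horizontal morphism and each morphism $(i,j)\to(i+m,j)$ to a vertical morphism (all commutative squares being allowed); the bisimplicial structure is given by precomposition with maps $[a']\times[b']\to[a]\times[b]$ induced by morphisms of $\Delta\times\Delta$, and the augmentation sends a zero object to the constant functor $[0]\times[0]\to\mathrm{Ar}[k]$ at it. *)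

theory Defs
  imports "HOL-Library.FuncSet"
begin

text \<open>Morphisms [c] -> [d] of Delta: monotone maps (only values on {0..c} matter).\<close>
definition dhom :: "nat \<Rightarrow> nat \<Rightarrow> (nat \<Rightarrow> nat) set" where
  "dhom c d = {f. (\<forall>i j. i \<le> j \<and> j \<le> c \<longrightarrow> f i \<le> f j) \<and> (\<forall>i\<le>c. f i \<le> d)}"

datatype sig = Neg | SP nat nat   (* Neg = [-1], SP a b = ([a],[b]) *)

datatype smor = ToNeg | PM "nat \<Rightarrow> nat" "nat \<Rightarrow> nat"

fun shom :: "sig \<Rightarrow> sig \<Rightarrow> smor set" where
  "shom _ Neg = {ToNeg}"
| "shom Neg (SP a b) = {}"
| "shom (SP a b) (SP a' b') = {PM f g | f g. f \<in> dhom a a' \<and> g \<in> dhom b b'}"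

text \<open>Ordinal sum functor p : Sigma -> Delta.\<close>
fun pobj :: "sig \<Rightarrow> nat" where
  "pobj Neg = 0"
| "pobj (SP a b) = a + 1 + b"

fun pmor :: "sig \<Rightarrow> sig \<Rightarrow> smor \<Rightarrow> (nat \<Rightarrow> nat)" where
  "pmor (SP a b) (SP a' b') (PM f g) = (\<lambda>i. if i \<le> a then f i else a' + 1 + g (i - (a + 1)))"
| "pmor _ _ _ = (\<lambda>_. 0)"

text \<open>A discrete presheaf is given by its sets of elements and its action;
  the action \<open>act c d f\<close> for a morphism \<open>f : c \<rightarrow> d\<close> maps elements over \<open>d\<close>
  to elements over \<open>c\<close>.\<close>

type_synonym 'x sspace = "(sig \<Rightarrow> 'x set) \<times> (sig \<Rightarrow> sig \<Rightarrow> smor \<Rightarrow> 'x \<Rightarrow> 'x)"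
type_synonym 'x simpspace = "(nat \<Rightarrow> 'x set) \<times> (nat \<Rightarrow> nat \<Rightarrow> (nat \<Rightarrow> nat) \<Rightarrow> 'x \<Rightarrow> 'x)"
type_synonym 'x msimpspace =
  "(nat list \<Rightarrow> 'x set) \<times> (nat list \<Rightarrow> nat list \<Rightarrow> (nat \<Rightarrow> nat) list \<Rightarrow> 'x \<Rightarrow> 'x)"

definition sigma_iso :: "'x sspace \<Rightarrow> 'y sspace \<Rightarrow> bool" where
  "sigma_iso X Y \<longleftrightarrow> (\<exists>\<phi> :: sig \<Rightarrow> 'x \<Rightarrow> 'y.
     (\<forall>\<sigma>. bij_betw (\<phi> \<sigma>) (fst X \<sigma>) (fst Y \<sigma>)) \<and>
     (\<forall>\<sigma> \<tau>. \<forall>f\<in>shom \<sigma> \<tau>. \<forall>x\<in>fst X \<tau>.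
        \<phi> \<sigma> (snd X \<sigma> \<tau> f x) = snd Y \<sigma> \<tau> f (\<phi> \<tau> x)))"

definition sprod :: "'x sspace list \<Rightarrow> 'x list sspace" where
  "sprod Xs = ((\<lambda>\<sigma>. {xs. length xs = length Xs \<and> (\<forall>i<length Xs. xs ! i \<in> fst (Xs ! i) \<sigma>)}),
               (\<lambda>\<sigma> \<tau> f xs. map (\<lambda>i. snd (Xs ! i) \<sigma> \<tau> f (xs ! i)) [0..<length Xs]))"

text \<open>Delta[k]: m-simplices are monotone maps [m] -> [k], encoded as sorted lists of
  length m+1 with entries \<le> k; action by precomposition.\<close>
definition DeltaRep :: "nat \<Rightarrow> nat list simpspace" where
  "DeltaRep k = ((\<lambda>m. {xs. length xs = m + 1 \<and> sorted xs \<and> (\<forall>x\<in>set xs. x \<le> k)}),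
                 (\<lambda>c d \<alpha> xs. map (\<lambda>i. xs ! (\<alpha> i)) [0..<c + 1]))"

text \<open>Delta[k_1,...,k_n]: n-fold simplicial set, (m_1,...,m_n)-simplices are tuples of
  monotone maps [m_i] -> [k_i]; morphisms are lists of Delta-maps.\<close>
definition DeltaRepN :: "nat list \<Rightarrow> nat list list msimpspace" where
  "DeltaRepN ks = ((\<lambda>ms. {xss. length ms = length ks \<and> length xss = length ks \<and>
                      (\<forall>i<length ks. length (xss ! i) = ms ! i + 1 \<and> sorted (xss ! i) \<and>
                          (\<forall>x\<in>set (xss ! i). x \<le> ks ! i))}),
                   (\<lambda>cs ds \<alpha>s xss. map (\<lambda>i. map (\<lambda>j. (xss ! i) ! ((\<alpha>s ! i) j)) [0..<cs ! i + 1])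
                                       [0..<length ks]))"

definition Pfun :: "'x simpspace \<Rightarrow> 'x sspace" where
  "Pfun X = ((\<lambda>\<sigma>. fst X (pobj \<sigma>)),
             (\<lambda>\<sigma> \<tau> f. snd X (pobj \<sigma>) (pobj \<tau>) (pmor \<sigma> \<tau> f)))"

definition PfunN :: "nat \<Rightarrow> 'x msimpspace \<Rightarrow> 'x sspace" where
  "PfunN n X = ((\<lambda>\<sigma>. fst X (replicate n (pobj \<sigma>))),
                (\<lambda>\<sigma> \<tau> f. snd X (replicate n (pobj \<sigma>)) (replicate n (pobj \<tau>))
                                (replicate n (pmor \<sigma> \<tau> f))))"

text \<open>Elements over [-1] are zero objects (Inl (i,i)); elements over ([a],[b]) are exact
  functors [a]x[b] -> Ar[k], encoded as extensional functions on {0..a}x{0..b} (Inr F).\<close>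

definition arobj :: "nat \<Rightarrow> nat \<times> nat \<Rightarrow> bool" where
  "arobj k x \<longleftrightarrow> fst x \<le> snd x \<and> snd x \<le> k"

definition exact_functor :: "nat \<Rightarrow> nat \<Rightarrow> nat \<Rightarrow> (nat \<times> nat \<Rightarrow> nat \<times> nat) \<Rightarrow> bool" where
  "exact_functor k a b F \<longleftrightarrow>
     F \<in> extensional ({0..a} \<times> {0..b}) \<and>
     (\<forall>i\<le>a. \<forall>j\<le>b. arobj k (F (i, j))) \<and>
     \<comment> \<open>functoriality = monotonicity (Ar[k] is a poset)\<close>
     (\<forall>i i' j j'. i \<le> i' \<and> i' \<le> a \<and> j \<le> j' \<and> j' \<le> b \<longrightarrow>
        fst (F (i, j)) \<le> fst (F (i', j')) \<and> snd (F (i, j)) \<le> snd (F (i', j'))) \<and>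
     \<comment> \<open>morphisms (i,j) -> (i,j+l) go to horizontal morphisms\<close>
     (\<forall>i j j'. i \<le> a \<and> j \<le> j' \<and> j' \<le> b \<longrightarrow> fst (F (i, j)) = fst (F (i, j'))) \<and>
     \<comment> \<open>morphisms (i,j) -> (i+m,j) go to vertical morphisms\<close>
     (\<forall>i i' j. i \<le> i' \<and> i' \<le> a \<and> j \<le> b \<longrightarrow> snd (F (i, j)) = snd (F (i', j)))"

fun nex_obj :: "nat \<Rightarrow> sig \<Rightarrow> ((nat \<times> nat) + (nat \<times> nat \<Rightarrow> nat \<times> nat)) set" where
  "nex_obj k Neg = Inl ` {(i, i) | i. i \<le> k}"
| "nex_obj k (SP a b) = Inr ` {F. exact_functor k a b F}"

fun nex_act :: "sig \<Rightarrow> sig \<Rightarrow> smor \<Rightarrow> ((nat \<times> nat) + (nat \<times> nat \<Rightarrow> nat \<times> nat))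
                 \<Rightarrow> ((nat \<times> nat) + (nat \<times> nat \<Rightarrow> nat \<times> nat))" where
  "nex_act Neg Neg _ x = x"
| "nex_act (SP a b) Neg _ (Inl z) = Inr (restrict (\<lambda>_. z) ({0..a} \<times> {0..b}))"
| "nex_act (SP a b) (SP a' b') (PM f g) (Inr F) =
     Inr (restrict (\<lambda>(i, j). F (f i, g j)) ({0..a} \<times> {0..b}))"
| "nex_act _ _ _ x = x"

definition NexAr :: "nat \<Rightarrow> ((nat \<times> nat) + (nat \<times> nat \<Rightarrow> nat \<times> nat)) sspace" where
  "NexAr k = (nex_obj k, nex_act)"

end

(*
  Since p^(n) is the diagonal, an element of P^(n) Delta[k_1,...,k_n] at sigma is a tuple
  of simplices of the Delta[k_i] of the common dimension p(sigma), acted on coordinatewise: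
  the first isomorphism is an identity.

  For the second, an (a+1+b)-simplex x_0 <= ... <= x_(a+1+b) of Delta[k] gives the exact functor
  (i, j) |-> (x_i, x_(a+1+j)), and a 0-simplex x_0 the zero object (x_0, x_0). Conversely,
  exactness forces F(i, j) = (fst F(i, 0), snd F(0, j)), so F is determined by its first column
  and its first row, and these concatenate to a monotone sequence because
  fst F(i, 0) <= snd F(i, 0) = snd F(0, 0) <= snd F(0, j). Isomorphisms of the factors then
  induce an isomorphism of the levelwise products.
*)

theory Submission
  imports Defs
begin

lemma bij_betw_map_nth:
  assumes bij: "\<And>i. i < n \<Longrightarrow> bij_betw (f i) (A i) (B i)"
  shows "bij_betw (\<lambda>xs. map (\<lambda>i. f i (xs ! i)) [0..<n])
           {xs. length xs = n \<and> (\<forall>i<n. xs ! i \<in> A i)} {ys. length ys = n \<and> (\<forall>i<n. ys ! i \<in> B i)}"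
proof -
  have "f i x \<in> B i" "inv_into (A i) (f i) (f i x) = x" if "i < n" "x \<in> A i" for i x
    using bij_betwE[OF bij] bij_betw_inv_into_left[OF bij] that by auto
  moreover have "inv_into (A i) (f i) y \<in> A i" "f i (inv_into (A i) (f i) y) = y"
    if "i < n" "y \<in> B i" for i y
    using bij_betwE[OF bij_betw_inv_into[OF bij]] bij_betw_inv_into_right[OF bij] that by auto
  ultimately show ?thesis
    by (intro bij_betw_byWitness[where f' = "\<lambda>ys. map (\<lambda>i. inv_into (A i) (f i) (ys ! i)) [0..<n]"])
      (auto intro!: nth_equalityI)
qed

lemma sigma_iso_refl: "sigma_iso X X"
  unfolding sigma_iso_def by (rule exI[of _ "\<lambda>_ x. x"]) (simp add: bij_betw_def)

lemma sigma_iso_sprod: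
  assumes "length Ys = length Xs" and "\<And>i. i < length Xs \<Longrightarrow> sigma_iso (Xs ! i) (Ys ! i)"
  shows "sigma_iso (sprod Xs) (sprod Ys)"
proof -
  obtain \<phi> where bij: "\<And>i \<sigma>. i < length Xs \<Longrightarrow> bij_betw (\<phi> i \<sigma>) (fst (Xs ! i) \<sigma>) (fst (Ys ! i) \<sigma>)"
    and natural: "\<And>i \<sigma> \<tau> f x. i < length Xs \<Longrightarrow> f \<in> shom \<sigma> \<tau> \<Longrightarrow> x \<in> fst (Xs ! i) \<tau> \<Longrightarrow>
                    \<phi> i \<sigma> (snd (Xs ! i) \<sigma> \<tau> f x) = snd (Ys ! i) \<sigma> \<tau> f (\<phi> i \<tau> x)"
    using assms(2) unfolding sigma_iso_def by metis
  show ?thesis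
    unfolding sigma_iso_def
  proof (intro exI[of _ "\<lambda>\<sigma> xs. map (\<lambda>i. \<phi> i \<sigma> (xs ! i)) [0..<length Xs]"] conjI allI ballI)
    fix \<sigma>
    show "bij_betw (\<lambda>xs. map (\<lambda>i. \<phi> i \<sigma> (xs ! i)) [0..<length Xs]) (fst (sprod Xs) \<sigma>) (fst (sprod Ys) \<sigma>)"
      using bij_betw_map_nth[of "length Xs", OF bij] assms(1) by (simp add: sprod_def)
  next
    fix \<sigma> \<tau> f xs
    assume "f \<in> shom \<sigma> \<tau>" and "xs \<in> fst (sprod Xs) \<tau>"
    then show "map (\<lambda>i. \<phi> i \<sigma> (snd (sprod Xs) \<sigma> \<tau> f xs ! i)) [0..<length Xs]
             = snd (sprod Ys) \<sigma> \<tau> f (map (\<lambda>i. \<phi> i \<tau> (xs ! i)) [0..<length Xs])"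
      using assms(1) by (auto simp: sprod_def natural intro!: nth_equalityI)
  qed
qed

lemma PfunN_DeltaRepN_eq_sprod:
  assumes "length ks = n"
  shows "PfunN n (DeltaRepN ks) = sprod (map (\<lambda>k. Pfun (DeltaRep k)) ks)"
  using assms by (auto simp: PfunN_def DeltaRepN_def sprod_def Pfun_def DeltaRep_def fun_eq_iff)

fun ar_of_simplex :: "sig \<Rightarrow> nat list \<Rightarrow> (nat \<times> nat) + (nat \<times> nat \<Rightarrow> nat \<times> nat)" where
  "ar_of_simplex Neg xs = Inl (xs ! 0, xs ! 0)"
| "ar_of_simplex (SP a b) xs = Inr (restrict (\<lambda>(i, j). (xs ! i, xs ! (a + 1 + j))) ({0..a} \<times> {0..b}))"

fun simplex_of_ar :: "sig \<Rightarrow> (nat \<times> nat) + (nat \<times> nat \<Rightarrow> nat \<times> nat) \<Rightarrow> nat list" where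
  "simplex_of_ar Neg (Inl z) = [fst z]"
| "simplex_of_ar (SP a b) (Inr F) = map (\<lambda>i. fst (F (i, 0))) [0..<a + 1] @ map (\<lambda>j. snd (F (0, j))) [0..<b + 1]"
| "simplex_of_ar _ _ = []"

lemma
  assumes "exact_functor k a b F" "i \<le> a" "j \<le> b"
  shows exact_functor_fst_le_snd: "fst (F (i, j)) \<le> snd (F (i, j))"
    and exact_functor_snd_le: "snd (F (i, j)) \<le> k"
  using assms unfolding exact_functor_def arobj_def by simp_all

lemma
  assumes "exact_functor k a b F" "i \<le> i'" "i' \<le> a" "j \<le> j'" "j' \<le> b"
  shows exact_functor_fst_mono: "fst (F (i, j)) \<le> fst (F (i', j'))"
    and exact_functor_snd_mono: "snd (F (i, j)) \<le> snd (F (i', j'))"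
  using assms unfolding exact_functor_def by simp_all

lemma exact_functor_eq_row_col:
  assumes "exact_functor k a b F" "i \<le> a" "j \<le> b"
  shows "F (i, j) = (fst (F (i, 0)), snd (F (0, j)))"
  using assms unfolding exact_functor_def by (simp add: prod_eq_iff)

lemma exact_functor_of_sorted:
  assumes "sorted xs" "length xs = a + b + 2" "\<forall>x\<in>set xs. x \<le> k"
  shows "exact_functor k a b (restrict (\<lambda>(i, j). (xs ! i, xs ! (a + 1 + j))) ({0..a} \<times> {0..b}))"
proof -
  have "xs ! i \<le> xs ! j" if "i \<le> j" "j < a + b + 2" for i j
    using assms(1,2) that by (simp add: sorted_iff_nth_mono)
  moreover have "xs ! i \<le> k" if "i < a + b + 2" for i
    using assms(2,3) that by auto
  ultimately show ?thesis
    unfolding exact_functor_def arobj_def by auto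
qed

lemma
  assumes F: "exact_functor k a b F"
  shows sorted_simplex_of_ar: "sorted (simplex_of_ar (SP a b) (Inr F))"
    and simplex_of_ar_le: "\<forall>x\<in>set (simplex_of_ar (SP a b) (Inr F)). x \<le> k"
proof -
  have row_le_col: "fst (F (i, 0)) \<le> snd (F (0, j))" if "i \<le> a" "j \<le> b" for i j
  proof -
    have "fst (F (i, 0)) \<le> snd (F (i, 0))" using exact_functor_fst_le_snd[OF F] that by simp
    also have "\<dots> = snd (F (0, 0))" using F that unfolding exact_functor_def by simp
    also have "\<dots> \<le> snd (F (0, j))" using exact_functor_snd_mono[OF F] that by simp
    finally show ?thesis .
  qed
  have "sorted (map (\<lambda>i. fst (F (i, 0))) [0..<a + 1])"
    by (intro sorted_map_mono sorted_upt mono_onI) (auto intro: exact_functor_fst_mono[OF F])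
  moreover have "sorted (map (\<lambda>j. snd (F (0, j))) [0..<b + 1])"
    by (intro sorted_map_mono sorted_upt mono_onI) (auto intro: exact_functor_snd_mono[OF F])
  moreover have "\<forall>x\<in>set (map (\<lambda>i. fst (F (i, 0))) [0..<a + 1]).
                   \<forall>y\<in>set (map (\<lambda>j. snd (F (0, j))) [0..<b + 1]). x \<le> y"
    using row_le_col by (simp del: upt_Suc)
  ultimately show "sorted (simplex_of_ar (SP a b) (Inr F))"
    by (simp only: simplex_of_ar.simps sorted_append)
  have "fst (F (i, 0)) \<le> k" if "i \<le> a" for i
    using row_le_col[OF that, of 0] exact_functor_snd_le[OF F, of 0 0] by simp
  then show "\<forall>x\<in>set (simplex_of_ar (SP a b) (Inr F)). x \<le> k"
    using exact_functor_snd_le[OF F, of 0] by (auto simp del: upt_Suc)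
qed

lemma bij_betw_ar_of_simplex:
  "bij_betw (ar_of_simplex \<sigma>) (fst (Pfun (DeltaRep k)) \<sigma>) (fst (NexAr k) \<sigma>)"
proof (cases \<sigma>)
  case Neg
  then show ?thesis
    by (intro bij_betw_byWitness[where f' = "simplex_of_ar Neg"])
      (auto simp: Pfun_def DeltaRep_def NexAr_def length_Suc_conv)
next
  case (SP a b)
  have "simplex_of_ar (SP a b) (ar_of_simplex (SP a b) xs) = xs" if "length xs = a + b + 2" for xs
    using that by (intro nth_equalityI) (auto simp: nth_append simp del: upt_Suc)
  moreover have "ar_of_simplex (SP a b) (simplex_of_ar (SP a b) (Inr F)) = Inr F"
    if F: "exact_functor k a b F" for F
  proof -
    let ?xs = "simplex_of_ar (SP a b) (Inr F)"
    have "restrict (\<lambda>(i, j). (?xs ! i, ?xs ! (a + 1 + j))) ({0..a} \<times> {0..b}) = F"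
    proof (rule extensionalityI[OF restrict_extensional])
      show "F \<in> extensional ({0..a} \<times> {0..b})"
        using F unfolding exact_functor_def by blast
      fix p assume "p \<in> {0..a} \<times> {0..b}"
      then obtain i j where "p = (i, j)" "i \<le> a" "j \<le> b" by auto
      then show "restrict (\<lambda>(i, j). (?xs ! i, ?xs ! (a + 1 + j))) ({0..a} \<times> {0..b}) p = F p"
        using exact_functor_eq_row_col[OF F, of i j] by (simp add: nth_append del: upt_Suc)
    qed
    then show ?thesis
      by (simp only: ar_of_simplex.simps)
  qed
  moreover have "length (simplex_of_ar (SP a b) (Inr F)) = a + b + 2" for F
    by simp
  ultimately show ?thesis
    using SP exact_functor_of_sorted sorted_simplex_of_ar simplex_of_ar_le
    by (intro bij_betw_byWitness[where f' = "simplex_of_ar (SP a b)"])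
      (auto simp: Pfun_def DeltaRep_def NexAr_def simp del: upt_Suc simplex_of_ar.simps)
qed

lemma ar_of_simplex_natural:
  assumes "f \<in> shom \<sigma> \<tau>" and "xs \<in> fst (Pfun (DeltaRep k)) \<tau>"
  shows "ar_of_simplex \<sigma> (snd (Pfun (DeltaRep k)) \<sigma> \<tau> f xs) = snd (NexAr k) \<sigma> \<tau> f (ar_of_simplex \<tau> xs)"
proof (cases \<tau>)
  case Neg
  with assms show ?thesis
    by (cases \<sigma>) (auto simp: Pfun_def DeltaRep_def NexAr_def fun_eq_iff simp del: upt_Suc)
next
  case (SP a' b')
  with assms(1) obtain a b g h where "\<sigma> = SP a b" "f = PM g h" "g \<in> dhom a a'" "h \<in> dhom b b'"
    by (cases \<sigma>) auto
  with assms(2) SP show ?thesis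
    by (auto simp: Pfun_def DeltaRep_def NexAr_def fun_eq_iff dhom_def nth_append simp del: upt_Suc)
qed

lemma sigma_iso_Pfun_DeltaRep_NexAr: "sigma_iso (Pfun (DeltaRep k)) (NexAr k)"
  unfolding sigma_iso_def using bij_betw_ar_of_simplex ar_of_simplex_natural by blast

theorem mainTheorem1:
  fixes n :: nat and ks :: "nat list"
  assumes "n \<ge> 1" and "length ks = n"
  shows "sigma_iso (PfunN n (DeltaRepN ks)) (sprod (map (\<lambda>k. Pfun (DeltaRep k)) ks))
       \<and> sigma_iso (sprod (map (\<lambda>k. Pfun (DeltaRep k)) ks)) (sprod (map NexAr ks))"
proof
  show "sigma_iso (PfunN n (DeltaRepN ks)) (sprod (map (\<lambda>k. Pfun (DeltaRep k)) ks))"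
    using PfunN_DeltaRepN_eq_sprod[OF assms(2)] sigma_iso_refl by simp
  show "sigma_iso (sprod (map (\<lambda>k. Pfun (DeltaRep k)) ks)) (sprod (map NexAr ks))"
    by (rule sigma_iso_sprod) (simp_all add: sigma_iso_Pfun_DeltaRep_NexAr)
qed

end
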